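(* Let $R$ be a commutative ring and $(A,d)$ a differential graded $R$-algebra, and suppose that the left dg-module $(A,d)$ over $(A,d)$ is a finite direct sum of dg-simple left dg-modules over $(A,d)$. Then for any dg-simple left dg-module $(S,\delta)$ over $(A,d)$ there is an integer $n\in\mathbb{Z}$ such that $(S,\delta)[n]$ is (isomorphic to) a direct summand of $(A,d)$ as left dg-module.
   Context: A differential graded (dg) $R$-algebra $(A,d)$ is a $\mathbb{Z}$-graded $R$-algebra $A$ with an $R$-linear degree-$1$ endomorphism $d$, $d^2=0$, $d(ab)=d(a)b+(-1)^{|a|}a\,d(b)$ for homogeneous $a,b$. A left dg-module $(M,\delta)$ is a graded left $A$-module with an $R$-linear degree-$1$ map $\delta$, $\delta^2=0$, $\delta(am)=d(a)m+(-1)^{|a|}a\,\delta(m)$. A dg-submodule is a graded submodule stable under $\delta$; morphisms are degree-$0$ $A$-linear maps commuting with differentials. $(S,\delta)$ is dg-simple if its only dg-submodules are $0$ and $S$ (and $S\neq 0$). For $n\in\mathbb{Z}$, $(M,\delta)[n]$ denotes the shifted dg-module, with degree-$k$ component $M^{k+n}$ (and the differential adjusted by the standard sign). *)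

theory Defs
  imports Main
begin

text \<open>
A graded R-module (R a commutative ring, type class comm_ring_1) is represented by its
family of homogeneous components comp M k (k :: int), all living in an ambient type,
together with the addition, zero, negation, scalar multiplication and differential,
which are only ever used on homogeneous elements of a fixed degree.
\<close>

record ('r, 'a) gmod =
  comp  :: "int \<Rightarrow> 'a set"
  gadd  :: "'a \<Rightarrow> 'a \<Rightarrow> 'a"
  gzero :: "'a"
  gneg  :: "'a \<Rightarrow> 'a"
  gsmul :: "'r \<Rightarrow> 'a \<Rightarrow> 'a"
  gdiff :: "'a \<Rightarrow> 'a"

definition gsign :: "('r, 'a, 'z) gmod_scheme \<Rightarrow> int \<Rightarrow> 'a \<Rightarrow> 'a" where
  "gsign M i x = (if even i then x else gneg M x)"

definition graded_module :: "('r::comm_ring_1, 'a, 'z) gmod_scheme \<Rightarrow> bool" where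
  "graded_module M \<longleftrightarrow> (\<forall>k.
     gzero M \<in> comp M k \<and>
     (\<forall>x\<in>comp M k. \<forall>y\<in>comp M k. gadd M x y \<in> comp M k) \<and>
     (\<forall>x\<in>comp M k. gneg M x \<in> comp M k) \<and>
     (\<forall>r. \<forall>x\<in>comp M k. gsmul M r x \<in> comp M k) \<and>
     (\<forall>x\<in>comp M k. \<forall>y\<in>comp M k. \<forall>z\<in>comp M k.
        gadd M (gadd M x y) z = gadd M x (gadd M y z)) \<and>
     (\<forall>x\<in>comp M k. \<forall>y\<in>comp M k. gadd M x y = gadd M y x) \<and>
     (\<forall>x\<in>comp M k. gadd M (gzero M) x = x) \<and>
     (\<forall>x\<in>comp M k. gadd M (gneg M x) x = gzero M) \<and>
     (\<forall>r s. \<forall>x\<in>comp M k. gsmul M (r + s) x = gadd M (gsmul M r x) (gsmul M s x)) \<and>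
     (\<forall>r. \<forall>x\<in>comp M k. \<forall>y\<in>comp M k.
        gsmul M r (gadd M x y) = gadd M (gsmul M r x) (gsmul M r y)) \<and>
     (\<forall>r s. \<forall>x\<in>comp M k. gsmul M (r * s) x = gsmul M r (gsmul M s x)) \<and>
     (\<forall>x\<in>comp M k. gsmul M 1 x = x))"

definition dg_complex :: "('r::comm_ring_1, 'a, 'z) gmod_scheme \<Rightarrow> bool" where
  "dg_complex M \<longleftrightarrow> graded_module M \<and> (\<forall>k.
     (\<forall>x\<in>comp M k. gdiff M x \<in> comp M (k + 1)) \<and>
     (\<forall>x\<in>comp M k. \<forall>y\<in>comp M k. gdiff M (gadd M x y) = gadd M (gdiff M x) (gdiff M y)) \<and>
     (\<forall>r. \<forall>x\<in>comp M k. gdiff M (gsmul M r x) = gsmul M r (gdiff M x)) \<and>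
     (\<forall>x\<in>comp M k. gdiff M (gdiff M x) = gzero M))"

definition dg_algebra ::
  "('r::comm_ring_1, 'a) gmod \<Rightarrow> ('a \<Rightarrow> 'a \<Rightarrow> 'a) \<Rightarrow> 'a \<Rightarrow> bool" where
  "dg_algebra A mult one \<longleftrightarrow> dg_complex A \<and> one \<in> comp A 0 \<and>
   (\<forall>i j. \<forall>a\<in>comp A i. \<forall>b\<in>comp A j.
      mult a b \<in> comp A (i + j) \<and>
      (\<forall>a'\<in>comp A i. mult (gadd A a a') b = gadd A (mult a b) (mult a' b)) \<and>
      (\<forall>b'\<in>comp A j. mult a (gadd A b b') = gadd A (mult a b) (mult a b')) \<and>
      (\<forall>l. \<forall>c\<in>comp A l. mult (mult a b) c = mult a (mult b c)) \<and>
      (\<forall>r. gsmul A r (mult a b) = mult (gsmul A r a) b \<and>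
           gsmul A r (mult a b) = mult a (gsmul A r b)) \<and>
      gdiff A (mult a b) = gadd A (mult (gdiff A a) b) (gsign A i (mult a (gdiff A b)))) \<and>
   (\<forall>i. \<forall>a\<in>comp A i. mult one a = a \<and> mult a one = a)"

text \<open>left dg-module (M, delta) over (A, d); act i a m is the action of a homogeneous
  element a of degree i on m (the degree is passed explicitly so that sign twists are
  well defined)\<close>
definition dg_module ::
  "('r::comm_ring_1, 'a) gmod \<Rightarrow> ('a \<Rightarrow> 'a \<Rightarrow> 'a) \<Rightarrow> 'a \<Rightarrow>
   ('r, 'm) gmod \<Rightarrow> (int \<Rightarrow> 'a \<Rightarrow> 'm \<Rightarrow> 'm) \<Rightarrow> bool" where
  "dg_module A mult one M act \<longleftrightarrow> dg_complex M \<and>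
   (\<forall>i j. \<forall>a\<in>comp A i. \<forall>m\<in>comp M j.
      act i a m \<in> comp M (i + j) \<and>
      (\<forall>a'\<in>comp A i. act i (gadd A a a') m = gadd M (act i a m) (act i a' m)) \<and>
      (\<forall>m'\<in>comp M j. act i a (gadd M m m') = gadd M (act i a m) (act i a m')) \<and>
      (\<forall>l. \<forall>b\<in>comp A l. act (l + i) (mult b a) m = act l b (act i a m)) \<and>
      (\<forall>r. gsmul M r (act i a m) = act i (gsmul A r a) m \<and>
           gsmul M r (act i a m) = act i a (gsmul M r m)) \<and>
      gdiff M (act i a m) =
        gadd M (act (i + 1) (gdiff A a) m) (gsign M i (act i a (gdiff M m)))) \<and>
   (\<forall>j. \<forall>m\<in>comp M j. act 0 one m = m)"

definition dg_submodule ::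
  "('r::comm_ring_1, 'a) gmod \<Rightarrow> ('r, 'm) gmod \<Rightarrow> (int \<Rightarrow> 'a \<Rightarrow> 'm \<Rightarrow> 'm) \<Rightarrow>
   (int \<Rightarrow> 'm set) \<Rightarrow> bool" where
  "dg_submodule A M act N \<longleftrightarrow> (\<forall>k.
     N k \<subseteq> comp M k \<and> gzero M \<in> N k \<and>
     (\<forall>x\<in>N k. \<forall>y\<in>N k. gadd M x y \<in> N k) \<and>
     (\<forall>x\<in>N k. gneg M x \<in> N k) \<and>
     (\<forall>r. \<forall>x\<in>N k. gsmul M r x \<in> N k) \<and>
     (\<forall>i. \<forall>a\<in>comp A i. \<forall>x\<in>N k. act i a x \<in> N (i + k)) \<and>
     (\<forall>x\<in>N k. gdiff M x \<in> N (k + 1)))"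

definition dg_simple ::
  "('r::comm_ring_1, 'a) gmod \<Rightarrow> ('a \<Rightarrow> 'a \<Rightarrow> 'a) \<Rightarrow> 'a \<Rightarrow>
   ('r, 'm) gmod \<Rightarrow> (int \<Rightarrow> 'a \<Rightarrow> 'm \<Rightarrow> 'm) \<Rightarrow> bool" where
  "dg_simple A mult one S act \<longleftrightarrow> dg_module A mult one S act \<and>
     (\<exists>k. comp S k \<noteq> {gzero S}) \<and>
     (\<forall>N. dg_submodule A S act N \<longrightarrow>
        (\<forall>k. N k = {gzero S}) \<or> (\<forall>k. N k = comp S k))"

text \<open>Shift (M,delta)[n]: degree-k component is M^(k+n); standard (Koszul) signs:
  differential (-1)^n delta, action a .m = (-1)^(n |a|) a m\<close>
definition shift_mod :: "('r, 'm) gmod \<Rightarrow> int \<Rightarrow> ('r, 'm) gmod" where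
  "shift_mod M n = M\<lparr>comp := (\<lambda>k. comp M (k + n)), gdiff := (\<lambda>x. gsign M n (gdiff M x))\<rparr>"

definition shift_act :: "('r, 'm) gmod \<Rightarrow> (int \<Rightarrow> 'a \<Rightarrow> 'm \<Rightarrow> 'm) \<Rightarrow> int \<Rightarrow>
   (int \<Rightarrow> 'a \<Rightarrow> 'm \<Rightarrow> 'm)" where
  "shift_act M act n = (\<lambda>i a x. gsign M (n * i) (act i a x))"

definition sub_mod :: "('r, 'm) gmod \<Rightarrow> (int \<Rightarrow> 'm set) \<Rightarrow> ('r, 'm) gmod" where
  "sub_mod M N = M\<lparr>comp := N\<rparr>"

definition dg_iso ::
  "('r::comm_ring_1, 'a) gmod \<Rightarrow> ('r, 'm) gmod \<Rightarrow> (int \<Rightarrow> 'a \<Rightarrow> 'm \<Rightarrow> 'm) \<Rightarrow>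
   ('r, 'n) gmod \<Rightarrow> (int \<Rightarrow> 'a \<Rightarrow> 'n \<Rightarrow> 'n) \<Rightarrow> (int \<Rightarrow> 'm \<Rightarrow> 'n) \<Rightarrow> bool" where
  "dg_iso A M act M' act' f \<longleftrightarrow> (\<forall>k.
     bij_betw (f k) (comp M k) (comp M' k) \<and>
     (\<forall>x\<in>comp M k. \<forall>y\<in>comp M k. f k (gadd M x y) = gadd M' (f k x) (f k y)) \<and>
     (\<forall>r. \<forall>x\<in>comp M k. f k (gsmul M r x) = gsmul M' r (f k x)) \<and>
     (\<forall>i. \<forall>a\<in>comp A i. \<forall>x\<in>comp M k. f (i + k) (act i a x) = act' i a (f k x)) \<and>
     (\<forall>x\<in>comp M k. f (k + 1) (gdiff M x) = gdiff M' (f k x)))"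

definition reg_act :: "('a \<Rightarrow> 'a \<Rightarrow> 'a) \<Rightarrow> int \<Rightarrow> 'a \<Rightarrow> 'a \<Rightarrow> 'a" where
  "reg_act mult = (\<lambda>i a b. mult a b)"

definition gsum_list :: "('r, 'a) gmod \<Rightarrow> 'a list \<Rightarrow> 'a" where
  "gsum_list M xs = foldr (gadd M) xs (gzero M)"

definition finite_sum_of_dg_simples ::
  "('r::comm_ring_1, 'a) gmod \<Rightarrow> ('a \<Rightarrow> 'a \<Rightarrow> 'a) \<Rightarrow> 'a \<Rightarrow> bool" where
  "finite_sum_of_dg_simples A mult one \<longleftrightarrow>
    (\<exists>Ns :: (int \<Rightarrow> 'a set) list.
       (\<forall>N\<in>set Ns. dg_submodule A A (reg_act mult) N \<and>
                   dg_simple A mult one (sub_mod A N) (reg_act mult)) \<and>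
       (\<forall>k. \<forall>x\<in>comp A k. \<exists>!xs. length xs = length Ns \<and>
            (\<forall>j<length Ns. xs ! j \<in> (Ns ! j) k) \<and> x = gsum_list A xs))"

definition dg_direct_summand ::
  "('r::comm_ring_1, 'a) gmod \<Rightarrow> ('a \<Rightarrow> 'a \<Rightarrow> 'a) \<Rightarrow> (int \<Rightarrow> 'a set) \<Rightarrow> bool" where
  "dg_direct_summand A mult N \<longleftrightarrow> dg_submodule A A (reg_act mult) N \<and>
    (\<exists>N'. dg_submodule A A (reg_act mult) N' \<and>
       (\<forall>k. N k \<inter> N' k = {gzero A} \<and>
            (\<forall>x\<in>comp A k. \<exists>y\<in>N k. \<exists>z\<in>N' k. x = gadd A y z)))"

end

(* A dg-simple module S contains a nonzero cycle z, of degree m say: either some nonzero s is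
   a cycle, or d s is. Decomposing 1 = e_1 + ... + e_r along A = N_1 + ... + N_r gives
   z = e_1 z + ... + e_r z, so e_j z is nonzero for some j. Right multiplication b |-> b z is then
   a nonzero map N_j -> S raising degrees by m and commuting with the action and the differentials;
   its kernel and image are dg-submodules, so by dg-simplicity of N_j and S it is bijective.
   Twisted by the sign (-1)^(m k) in degree k it becomes an isomorphism S[m] = N_j, and N_j is a
   direct summand of A, complemented by the sum of the other N_i. *)

theory Submission
  imports Defs
begin

section \<open>Graded modules\<close>

lemma gsum_list_Nil [simp]: "gsum_list M [] = gzero M"
  by (simp add: gsum_list_def)

lemma gsum_list_Cons [simp]: "gsum_list M (x # xs) = gadd M x (gsum_list M xs)"
  by (simp add: gsum_list_def)

context
  fixes M :: "('r::comm_ring_1, 'a) gmod"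
  assumes M: "graded_module M"
begin

lemma gzero_in: "gzero M \<in> comp M k"
  using M unfolding graded_module_def by (elim allE[of _ k] conjE) blast

lemma gadd_in: "x \<in> comp M k \<Longrightarrow> y \<in> comp M k \<Longrightarrow> gadd M x y \<in> comp M k"
  using M unfolding graded_module_def by (elim allE[of _ k] conjE) blast

lemma gneg_in: "x \<in> comp M k \<Longrightarrow> gneg M x \<in> comp M k"
  using M unfolding graded_module_def by (elim allE[of _ k] conjE) blast

lemma gsmul_in: "x \<in> comp M k \<Longrightarrow> gsmul M r x \<in> comp M k"
  using M unfolding graded_module_def by (elim allE[of _ k] conjE) blast

lemma gadd_assoc:
  "x \<in> comp M k \<Longrightarrow> y \<in> comp M k \<Longrightarrow> z \<in> comp M k \<Longrightarrow>
    gadd M (gadd M x y) z = gadd M x (gadd M y z)"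
  using M unfolding graded_module_def by (elim allE[of _ k] conjE) blast

lemma gadd_commute: "x \<in> comp M k \<Longrightarrow> y \<in> comp M k \<Longrightarrow> gadd M x y = gadd M y x"
  using M unfolding graded_module_def by (elim allE[of _ k] conjE) blast

lemma gadd_zero_left: "x \<in> comp M k \<Longrightarrow> gadd M (gzero M) x = x"
  using M unfolding graded_module_def by (elim allE[of _ k] conjE) blast

lemma gadd_neg_left: "x \<in> comp M k \<Longrightarrow> gadd M (gneg M x) x = gzero M"
  using M unfolding graded_module_def by (elim allE[of _ k] conjE) blast

lemma gsmul_gadd:
  "x \<in> comp M k \<Longrightarrow> y \<in> comp M k \<Longrightarrow> gsmul M r (gadd M x y) = gadd M (gsmul M r x) (gsmul M r y)"
  using M unfolding graded_module_def by (elim allE[of _ k] conjE) blast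

lemma gadd_zero_right: "x \<in> comp M k \<Longrightarrow> gadd M x (gzero M) = x"
  using gadd_commute[OF _ gzero_in] gadd_zero_left by simp

lemma gadd_neg_right: "x \<in> comp M k \<Longrightarrow> gadd M x (gneg M x) = gzero M"
  using gadd_commute[OF _ gneg_in] gadd_neg_left by simp

lemma gadd_left_cancel:
  assumes x: "x \<in> comp M k" and y: "y \<in> comp M k" and z: "z \<in> comp M k"
  shows "gadd M x y = gadd M x z \<longleftrightarrow> y = z"
proof
  have "\<And>u. u \<in> comp M k \<Longrightarrow> gadd M (gneg M x) (gadd M x u) = u"
    using x gadd_assoc[OF gneg_in[OF x] x] by (simp add: gadd_neg_left gadd_zero_left)
  then show "gadd M x y = gadd M x z \<Longrightarrow> y = z"
    using y z by metis
qed simp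

lemma gneg_unique:
  assumes x: "x \<in> comp M k" and y: "y \<in> comp M k" and xy: "gadd M x y = gzero M"
  shows "x = gneg M y"
proof -
  have "x = gadd M x (gadd M y (gneg M y))"
    using x y by (simp add: gadd_neg_right gadd_zero_right)
  also have "\<dots> = gadd M (gadd M x y) (gneg M y)"
    using x y by (simp add: gadd_assoc gneg_in)
  also have "\<dots> = gneg M y"
    using xy gadd_zero_left[OF gneg_in[OF y]] by simp
  finally show ?thesis .
qed

lemma gneg_gneg: "x \<in> comp M k \<Longrightarrow> gneg M (gneg M x) = x"
  using gneg_unique[OF _ gneg_in gadd_neg_right] by simp

lemma gneg_gzero: "gneg M (gzero M) = gzero M"
  using gneg_unique[OF gzero_in gzero_in gadd_zero_left[OF gzero_in]] by simp

lemma gadd_gneg_eq_gzero_iff: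
  "x \<in> comp M k \<Longrightarrow> y \<in> comp M k \<Longrightarrow> gadd M x (gneg M y) = gzero M \<longleftrightarrow> x = y"
  using gneg_unique[OF _ gneg_in] gneg_gneg gadd_neg_right by metis

lemma gadd_gadd_swap:
  assumes "a \<in> comp M k" "b \<in> comp M k" "c \<in> comp M k" "d \<in> comp M k"
  shows "gadd M (gadd M a b) (gadd M c d) = gadd M (gadd M a c) (gadd M b d)"
proof -
  have "gadd M b (gadd M c d) = gadd M c (gadd M b d)"
    using assms gadd_assoc[of b k c d] gadd_assoc[of c k b d] gadd_commute[of b k c] by simp
  then show ?thesis
    using assms by (simp add: gadd_assoc gadd_in)
qed

lemma gneg_gadd:
  assumes x: "x \<in> comp M k" and y: "y \<in> comp M k"
  shows "gneg M (gadd M x y) = gadd M (gneg M x) (gneg M y)"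
proof -
  have "gadd M (gadd M (gneg M x) (gneg M y)) (gadd M x y) =
      gadd M (gadd M (gneg M x) x) (gadd M (gneg M y) y)"
    using gadd_gadd_swap[OF gneg_in[OF x] gneg_in[OF y] x y] .
  also have "\<dots> = gzero M"
    using x y by (simp add: gadd_neg_left gadd_zero_left gzero_in)
  finally have "gadd M (gadd M (gneg M x) (gneg M y)) (gadd M x y) = gzero M" .
  then show ?thesis
    using gneg_unique[OF gadd_in[OF gneg_in[OF x] gneg_in[OF y]] gadd_in[OF x y]] by simp
qed

lemma gsign_in: "x \<in> comp M k \<Longrightarrow> gsign M i x \<in> comp M k"
  by (simp add: gsign_def gneg_in)

lemma gsign_gsign: "x \<in> comp M k \<Longrightarrow> gsign M i (gsign M j x) = gsign M (i + j) x"
  by (auto simp: gsign_def gneg_gneg)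

lemma gsign_gzero: "gsign M i (gzero M) = gzero M"
  by (simp add: gsign_def gneg_gzero)

lemma gsign_gadd:
  "x \<in> comp M k \<Longrightarrow> y \<in> comp M k \<Longrightarrow> gsign M i (gadd M x y) = gadd M (gsign M i x) (gsign M i y)"
  by (simp add: gsign_def gneg_gadd)

lemma bij_betw_gsign: "bij_betw (gsign M i) (comp M k) (comp M k)"
proof -
  have "\<forall>x\<in>comp M k. gsign M i (gsign M i x) = x"
    using gsign_gsign[of _ k i i] by (simp add: gsign_def)
  then show ?thesis
    by (intro bij_betw_byWitness[where f' = "gsign M i"]) (auto simp: gsign_in)
qed

lemma gsum_list_in: "set xs \<subseteq> comp M k \<Longrightarrow> gsum_list M xs \<in> comp M k"
  by (induction xs) (auto simp: gzero_in gadd_in)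

lemma gsum_list_zeros: "\<forall>x\<in>set xs. x = gzero M \<Longrightarrow> gsum_list M xs = gzero M"
  by (induction xs) (auto simp: gadd_zero_left gzero_in)

lemma gsum_list_map2_gadd:
  "length xs = length ys \<Longrightarrow> set xs \<subseteq> comp M k \<Longrightarrow> set ys \<subseteq> comp M k \<Longrightarrow>
    gsum_list M (map2 (gadd M) xs ys) = gadd M (gsum_list M xs) (gsum_list M ys)"
proof (induction xs ys rule: list_induct2)
  case Nil
  then show ?case by (simp add: gadd_zero_left gzero_in)
next
  case (Cons x xs y ys)
  then show ?case
    using gadd_gadd_swap[of x k y "gsum_list M xs" "gsum_list M ys"] gsum_list_in[of _ k] by simp
qed

lemma gsum_list_update:
  "j < length xs \<Longrightarrow> set xs \<subseteq> comp M k \<Longrightarrow>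
    gsum_list M xs = gadd M (xs ! j) (gsum_list M (xs[j := gzero M]))"
proof (induction xs arbitrary: j)
  case Nil
  then show ?case by simp
next
  case (Cons x xs)
  show ?case
  proof (cases j)
    case 0
    with Cons.prems show ?thesis
      using gadd_zero_left[OF gsum_list_in[of xs k]] by simp
  next
    case (Suc i)
    with Cons have IH: "gsum_list M xs = gadd M (xs ! i) (gsum_list M (xs[i := gzero M]))" by simp
    have "set (xs[i := gzero M]) \<subseteq> comp M k"
      using Cons.prems by (auto dest: subsetD[OF set_update_subset_insert] simp: gzero_in)
    then have "gsum_list M (xs[i := gzero M]) \<in> comp M k" by (rule gsum_list_in)
    moreover have "x \<in> comp M k" "xs ! i \<in> comp M k"
      using Cons.prems Suc by auto
    ultimately show ?thesis
      using Suc IH gadd_assoc[of x k "xs ! i"] gadd_assoc[of "xs ! i" k x] gadd_commute[of x k "xs ! i"]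
      by simp
  qed
qed

end

definition additive_map ::
  "('r, 'a) gmod \<Rightarrow> int \<Rightarrow> ('s, 'b) gmod \<Rightarrow> int \<Rightarrow> ('a \<Rightarrow> 'b) \<Rightarrow> bool" where
  "additive_map M k M' k' h \<longleftrightarrow> (\<forall>x\<in>comp M k. h x \<in> comp M' k') \<and>
     (\<forall>x\<in>comp M k. \<forall>y\<in>comp M k. h (gadd M x y) = gadd M' (h x) (h y))"

lemma additive_map_in: "additive_map M k M' k' h \<Longrightarrow> x \<in> comp M k \<Longrightarrow> h x \<in> comp M' k'"
  unfolding additive_map_def by blast

lemma additive_map_gadd:
  "additive_map M k M' k' h \<Longrightarrow> x \<in> comp M k \<Longrightarrow> y \<in> comp M k \<Longrightarrow>
    h (gadd M x y) = gadd M' (h x) (h y)"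
  unfolding additive_map_def by blast

context
  fixes M :: "('r::comm_ring_1, 'a) gmod" and M' :: "('r, 'b) gmod"
  assumes M: "graded_module M" and M': "graded_module M'"
begin

lemma additive_map_gzero:
  assumes h: "additive_map M k M' k' h"
  shows "h (gzero M) = gzero M'"
proof -
  have h0: "h (gzero M) \<in> comp M' k'"
    using additive_map_in[OF h gzero_in[OF M]] .
  have "gadd M' (h (gzero M)) (h (gzero M)) = gadd M' (h (gzero M)) (gzero M')"
    using additive_map_gadd[OF h gzero_in[OF M] gzero_in[OF M]]
    by (simp add: gadd_zero_left[OF M gzero_in[OF M]] gadd_zero_right[OF M' h0])
  then show ?thesis
    using gadd_left_cancel[OF M' h0 h0 gzero_in[OF M']] by simp
qed

lemma additive_map_gneg:
  assumes h: "additive_map M k M' k' h" and x: "x \<in> comp M k"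
  shows "h (gneg M x) = gneg M' (h x)"
proof -
  have "gadd M' (h (gneg M x)) (h x) = gzero M'"
    using additive_map_gadd[OF h gneg_in[OF M x] x] gadd_neg_left[OF M x] additive_map_gzero[OF h]
    by simp
  then show ?thesis
    using gneg_unique[OF M' additive_map_in[OF h gneg_in[OF M x]] additive_map_in[OF h x]] by simp
qed

lemma additive_map_gsign:
  "additive_map M k M' k' h \<Longrightarrow> x \<in> comp M k \<Longrightarrow> h (gsign M i x) = gsign M' i (h x)"
  by (simp add: gsign_def additive_map_gneg)

lemma additive_map_gsum_list:
  assumes h: "additive_map M k M' k' h"
  shows "set xs \<subseteq> comp M k \<Longrightarrow> h (gsum_list M xs) = gsum_list M' (map h xs)"
proof (induction xs)
  case Nil
  then show ?case
    using additive_map_gzero[OF h] by simp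
next
  case (Cons x xs)
  then show ?case
    using additive_map_gadd[OF h _ gsum_list_in[OF M]] by simp
qed

end

lemma dg_complex_graded_module: "dg_complex M \<Longrightarrow> graded_module M"
  by (simp add: dg_complex_def)

context
  fixes M :: "('r::comm_ring_1, 'a) gmod"
  assumes M: "dg_complex M"
begin

lemma gdiff_in: "x \<in> comp M k \<Longrightarrow> gdiff M x \<in> comp M (k + 1)"
  using M unfolding dg_complex_def by blast

lemma gdiff_gdiff: "x \<in> comp M k \<Longrightarrow> gdiff M (gdiff M x) = gzero M"
  using M unfolding dg_complex_def by blast

lemma gdiff_additive: "additive_map M k M (k + 1) (gdiff M)"
  using M unfolding dg_complex_def additive_map_def by blast

end

lemma gsmul_additive: "graded_module M \<Longrightarrow> additive_map M k M k (gsmul M r)"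
  by (simp add: additive_map_def gsmul_in gsmul_gadd)

lemma gneg_additive: "graded_module M \<Longrightarrow> additive_map M k M k (gneg M)"
  by (simp add: additive_map_def gneg_in gneg_gadd)

lemma dg_module_complex: "dg_module A mult one M act \<Longrightarrow> dg_complex M"
  by (simp add: dg_module_def)

context
  fixes A :: "('r::comm_ring_1, 'a) gmod" and mult :: "'a \<Rightarrow> 'a \<Rightarrow> 'a" and one :: 'a
    and M :: "('r, 'm) gmod" and act :: "int \<Rightarrow> 'a \<Rightarrow> 'm \<Rightarrow> 'm"
  assumes M: "dg_module A mult one M act"
begin

lemma act_in: "a \<in> comp A i \<Longrightarrow> x \<in> comp M j \<Longrightarrow> act i a x \<in> comp M (i + j)"
  using M unfolding dg_module_def by blast

lemma act_additive_left: "x \<in> comp M j \<Longrightarrow> additive_map A i M (i + j) (\<lambda>a. act i a x)"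
  using M unfolding dg_module_def additive_map_def by blast

lemma act_additive_right: "a \<in> comp A i \<Longrightarrow> additive_map M j M (i + j) (act i a)"
  using M unfolding dg_module_def additive_map_def by blast

lemma act_mult:
  "a \<in> comp A i \<Longrightarrow> b \<in> comp A l \<Longrightarrow> x \<in> comp M j \<Longrightarrow> act (l + i) (mult b a) x = act l b (act i a x)"
  using M unfolding dg_module_def by blast

lemma act_gsmul_left:
  "a \<in> comp A i \<Longrightarrow> x \<in> comp M j \<Longrightarrow> act i (gsmul A r a) x = gsmul M r (act i a x)"
  using M unfolding dg_module_def by metis

lemma gdiff_act:
  "a \<in> comp A i \<Longrightarrow> x \<in> comp M j \<Longrightarrow>
    gdiff M (act i a x) = gadd M (act (i + 1) (gdiff A a) x) (gsign M i (act i a (gdiff M x)))"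
  using M unfolding dg_module_def by blast

lemma act_one: "x \<in> comp M j \<Longrightarrow> act 0 one x = x"
  using M unfolding dg_module_def by blast

end

lemma dg_algebra_one_in: "dg_algebra A mult one \<Longrightarrow> one \<in> comp A 0"
  by (simp add: dg_algebra_def)

lemma dg_algebra_regular_module: "dg_algebra A mult one \<Longrightarrow> dg_module A mult one A (reg_act mult)"
  unfolding dg_algebra_def dg_module_def reg_act_def by blast

lemma dg_submodule_subset: "dg_submodule A M act N \<Longrightarrow> N k \<subseteq> comp M k"
  by (simp add: dg_submodule_def)

lemma dg_submodule_gzero: "dg_submodule A M act N \<Longrightarrow> gzero M \<in> N k"
  by (simp add: dg_submodule_def)

lemma dg_submodule_gdiff: "dg_submodule A M act N \<Longrightarrow> x \<in> N k \<Longrightarrow> gdiff M x \<in> N (k + 1)"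
  unfolding dg_submodule_def by (elim allE[of _ k] conjE) blast

lemma dg_simple_dg_module: "dg_simple A mult one S act \<Longrightarrow> dg_module A mult one S act"
  by (simp add: dg_simple_def)

lemma dg_simple_nontrivial: "dg_simple A mult one S act \<Longrightarrow> \<exists>k. comp S k \<noteq> {gzero S}"
  by (simp add: dg_simple_def)

lemma dg_simple_dg_submodule_cases:
  "dg_simple A mult one S act \<Longrightarrow> dg_submodule A S act N \<Longrightarrow>
    (\<forall>k. N k = {gzero S}) \<or> (\<forall>k. N k = comp S k)"
  by (simp add: dg_simple_def)

lemma shift_mod_simps [simp]:
  "comp (shift_mod M n) k = comp M (k + n)"
  "gadd (shift_mod M n) = gadd M" "gzero (shift_mod M n) = gzero M"
  "gneg (shift_mod M n) = gneg M" "gsmul (shift_mod M n) = gsmul M"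
  "gdiff (shift_mod M n) x = gsign M n (gdiff M x)"
  by (simp_all add: shift_mod_def)

lemma sub_mod_simps [simp]:
  "comp (sub_mod M N) = N" "gadd (sub_mod M N) = gadd M" "gzero (sub_mod M N) = gzero M"
  "gneg (sub_mod M N) = gneg M" "gsmul (sub_mod M N) = gsmul M" "gdiff (sub_mod M N) = gdiff M"
  by (simp_all add: sub_mod_def)

section \<open>Maps of dg-modules and dg-simplicity\<close>

text \<open>Maps raising degrees by m that commute with action and differentials on the nose,
  without Koszul signs; the signs are inserted by dg_iso_shift_sign_twist.\<close>

definition dg_map ::
  "('r::comm_ring_1, 'a) gmod \<Rightarrow> ('r, 'm) gmod \<Rightarrow> (int \<Rightarrow> 'a \<Rightarrow> 'm \<Rightarrow> 'm) \<Rightarrow>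
   ('r, 'n) gmod \<Rightarrow> (int \<Rightarrow> 'a \<Rightarrow> 'n \<Rightarrow> 'n) \<Rightarrow> int \<Rightarrow> (int \<Rightarrow> 'm \<Rightarrow> 'n) \<Rightarrow> bool" where
  "dg_map A M act M' act' m f \<longleftrightarrow> (\<forall>k.
     additive_map M k M' (k + m) (f k) \<and>
     (\<forall>r. \<forall>x\<in>comp M k. f k (gsmul M r x) = gsmul M' r (f k x)) \<and>
     (\<forall>i. \<forall>a\<in>comp A i. \<forall>x\<in>comp M k. f (i + k) (act i a x) = act' i a (f k x)) \<and>
     (\<forall>x\<in>comp M k. f (k + 1) (gdiff M x) = gdiff M' (f k x)))"

lemma
  assumes "dg_map A M act M' act' m f"
  shows dg_map_additive: "additive_map M k M' (k + m) (f k)"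
    and dg_map_gsmul: "x \<in> comp M k \<Longrightarrow> f k (gsmul M r x) = gsmul M' r (f k x)"
    and dg_map_act: "a \<in> comp A i \<Longrightarrow> x \<in> comp M k \<Longrightarrow> f (i + k) (act i a x) = act' i a (f k x)"
    and dg_map_gdiff: "x \<in> comp M k \<Longrightarrow> f (k + 1) (gdiff M x) = gdiff M' (f k x)"
  using assms unfolding dg_map_def by blast+

lemma dg_iso_iff_dg_map:
  "dg_iso A M act M' act' f \<longleftrightarrow>
    dg_map A M act M' act' 0 f \<and> (\<forall>k. bij_betw (f k) (comp M k) (comp M' k))"
  unfolding dg_iso_def dg_map_def additive_map_def by (auto; meson bij_betwE)

lemma dg_submodule_kernel:
  assumes M: "dg_module A mult one M act" and M': "dg_module A mult one M' act'"
    and f: "dg_map A M act M' act' m f"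
  shows "dg_submodule A M act (\<lambda>k. {x \<in> comp M k. f k x = gzero M'})"
proof -
  let ?K = "\<lambda>k. {x \<in> comp M k. f k x = gzero M'}"
  have CM': "dg_complex M'" using M' by (rule dg_module_complex)
  have GM: "graded_module M" and GM': "graded_module M'"
    using M CM' by (simp_all add: dg_module_complex dg_complex_graded_module)
  note f_add = dg_map_additive[OF f]
  show ?thesis
    unfolding dg_submodule_def
  proof (intro allI conjI ballI)
    fix k
    show "?K k \<subseteq> comp M k" by blast
    show "gzero M \<in> ?K k"
      using gzero_in[OF GM] additive_map_gzero[OF GM GM' f_add] by simp
  next
    fix k x y assume "x \<in> ?K k" "y \<in> ?K k"
    then show "gadd M x y \<in> ?K k"
      using gadd_in[OF GM] additive_map_gadd[OF f_add] gadd_zero_left[OF GM' gzero_in[OF GM']] by simp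
  next
    fix k x assume "x \<in> ?K k"
    then show "gneg M x \<in> ?K k"
      using gneg_in[OF GM] additive_map_gneg[OF GM GM' f_add] gneg_gzero[OF GM'] by simp
  next
    fix k r x assume "x \<in> ?K k"
    then show "gsmul M r x \<in> ?K k"
      using gsmul_in[OF GM] dg_map_gsmul[OF f]
        additive_map_gzero[OF GM' GM' gsmul_additive[OF GM', of "k + m" r]] by simp
  next
    fix k i a x assume a: "a \<in> comp A i" and "x \<in> ?K k"
    then show "act i a x \<in> ?K (i + k)"
      using act_in[OF M a] dg_map_act[OF f a]
        additive_map_gzero[OF GM' GM' act_additive_right[OF M' a, of "k + m"]] by simp
  next
    fix k x assume "x \<in> ?K k"
    then show "gdiff M x \<in> ?K (k + 1)"
      using gdiff_in[OF dg_module_complex[OF M]] dg_map_gdiff[OF f]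
        additive_map_gzero[OF GM' GM' gdiff_additive[OF CM', of "k + m"]] by simp
  qed
qed

lemma dg_submodule_image:
  assumes M: "dg_module A mult one M act" and M': "dg_module A mult one M' act'"
    and f: "dg_map A M act M' act' m f"
  shows "dg_submodule A M' act' (\<lambda>k. f (k - m) ` comp M (k - m))"
proof -
  let ?I = "\<lambda>k. f (k - m) ` comp M (k - m)"
  have CM: "dg_complex M" using M by (rule dg_module_complex)
  have GM: "graded_module M" and GM': "graded_module M'"
    using CM M' by (simp_all add: dg_module_complex dg_complex_graded_module)
  note f_add = dg_map_additive[OF f]
  show ?thesis
    unfolding dg_submodule_def
  proof (intro allI conjI ballI)
    fix k
    show "?I k \<subseteq> comp M' k"
      using additive_map_in[OF f_add, of _ "k - m"] by auto
    show "gzero M' \<in> ?I k"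
      using gzero_in[OF GM] additive_map_gzero[OF GM GM' f_add] by (metis image_eqI)
  next
    fix k y y' assume "y \<in> ?I k" "y' \<in> ?I k"
    then obtain x x' where "x \<in> comp M (k - m)" "x' \<in> comp M (k - m)"
      and "y = f (k - m) x" "y' = f (k - m) x'" by blast
    then show "gadd M' y y' \<in> ?I k"
      using gadd_in[OF GM] additive_map_gadd[OF f_add] by (metis image_eqI)
  next
    fix k y assume "y \<in> ?I k"
    then obtain x where "x \<in> comp M (k - m)" "y = f (k - m) x" by blast
    then show "gneg M' y \<in> ?I k"
      using gneg_in[OF GM] additive_map_gneg[OF GM GM' f_add] by (metis image_eqI)
  next
    fix k r y assume "y \<in> ?I k"
    then obtain x where "x \<in> comp M (k - m)" "y = f (k - m) x" by blast
    then show "gsmul M' r y \<in> ?I k"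
      using gsmul_in[OF GM] dg_map_gsmul[OF f] by (metis image_eqI)
  next
    fix k i a y assume a: "a \<in> comp A i" and "y \<in> ?I k"
    then obtain x where x: "x \<in> comp M (k - m)" and y: "y = f (k - m) x" by blast
    have "act' i a y = f (i + k - m) (act i a x)"
      using dg_map_act[OF f a x] y by (simp add: add_diff_eq)
    moreover have "act i a x \<in> comp M (i + k - m)"
      using act_in[OF M a x] by (simp add: add_diff_eq)
    ultimately show "act' i a y \<in> ?I (i + k)" by simp
  next
    fix k y assume "y \<in> ?I k"
    then obtain x where x: "x \<in> comp M (k - m)" and y: "y = f (k - m) x" by blast
    have "gdiff M' y = f (k + 1 - m) (gdiff M x)"
      using dg_map_gdiff[OF f x] y by (simp add: diff_add_eq)
    moreover have "gdiff M x \<in> comp M (k + 1 - m)"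
      using gdiff_in[OF CM x] by (simp add: diff_add_eq)
    ultimately show "gdiff M' y \<in> ?I (k + 1)" by simp
  qed
qed

lemma dg_map_bij_betw_if_dg_simple:
  assumes M: "dg_simple A mult one M act" and M': "dg_simple A mult one M' act'"
    and f: "dg_map A M act M' act' m f"
    and x: "x \<in> comp M k" and fx: "f k x \<noteq> gzero M'"
  shows "bij_betw (f l) (comp M l) (comp M' (l + m))"
proof -
  have Mm: "dg_module A mult one M act" and M'm: "dg_module A mult one M' act'"
    using M M' by (simp_all add: dg_simple_dg_module)
  have GM: "graded_module M" and GM': "graded_module M'"
    using Mm M'm by (simp_all add: dg_module_complex dg_complex_graded_module)
  note f_add = dg_map_additive[OF f]
  have kernel: "{x \<in> comp M l. f l x = gzero M'} = {gzero M}"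
  proof -
    have "{x \<in> comp M k. f k x = gzero M'} \<noteq> comp M k"
      using x fx by blast
    then show ?thesis
      using dg_simple_dg_submodule_cases[OF M dg_submodule_kernel[OF Mm M'm f]] by blast
  qed
  have image: "f l ` comp M l = comp M' (l + m)"
  proof -
    have "f (k + m - m) ` comp M (k + m - m) \<noteq> {gzero M'}"
      using x fx by auto
    then have "\<forall>j. f (j - m) ` comp M (j - m) = comp M' j"
      using dg_simple_dg_submodule_cases[OF M' dg_submodule_image[OF Mm M'm f]] by blast
    then show ?thesis
      by (metis add_diff_cancel_right')
  qed
  have "inj_on (f l) (comp M l)"
  proof (rule inj_onI)
    fix y y' assume y: "y \<in> comp M l" and y': "y' \<in> comp M l" and eq: "f l y = f l y'"
    have "f l (gadd M y (gneg M y')) = gzero M'"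
      using eq additive_map_gadd[OF f_add y gneg_in[OF GM y']] additive_map_gneg[OF GM GM' f_add y']
        gadd_neg_right[OF GM' additive_map_in[OF f_add y']] by simp
    then have "gadd M y (gneg M y') = gzero M"
      using kernel gadd_in[OF GM y gneg_in[OF GM y']] by blast
    then show "y = y'"
      using gadd_gneg_eq_gzero_iff[OF GM y y'] by simp
  qed
  then show ?thesis
    using image by (simp add: bij_betw_def)
qed

text \<open>The sign (-1)^(m k) in degree k absorbs the signs (-1)^(m i) of the shifted action and
  (-1)^m of the shifted differential.\<close>

lemma dg_iso_shift_sign_twist:
  assumes M': "dg_module A mult one M' act'" and f: "dg_map A M act M' act' m f"
    and bij: "\<And>k. bij_betw (f k) (comp M k) (comp M' (k + m))"
  shows "dg_iso A M act (shift_mod M' m) (shift_act M' act' m) (\<lambda>k x. gsign M' (m * k) (f k x))"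
proof -
  have CM': "dg_complex M'" using M' by (rule dg_module_complex)
  have GM': "graded_module M'" using CM' by (rule dg_complex_graded_module)
  note f_add = dg_map_additive[OF f]
  have "dg_map A M act (shift_mod M' m) (shift_act M' act' m) 0 (\<lambda>k x. gsign M' (m * k) (f k x))"
    unfolding dg_map_def additive_map_def add_0_right shift_mod_simps shift_act_def
  proof (intro allI conjI ballI)
    fix k x assume x: "x \<in> comp M k"
    show "gsign M' (m * k) (f k x) \<in> comp M' (k + m)"
      using gsign_in[OF GM' additive_map_in[OF f_add x]] .
    fix y assume y: "y \<in> comp M k"
    show "gsign M' (m * k) (f k (gadd M x y)) =
        gadd M' (gsign M' (m * k) (f k x)) (gsign M' (m * k) (f k y))"
      using additive_map_gadd[OF f_add x y]
        gsign_gadd[OF GM' additive_map_in[OF f_add x] additive_map_in[OF f_add y]] by simp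
  next
    fix k r x assume x: "x \<in> comp M k"
    show "gsign M' (m * k) (f k (gsmul M r x)) = gsmul M' r (gsign M' (m * k) (f k x))"
      using dg_map_gsmul[OF f x]
        additive_map_gsign[OF GM' GM' gsmul_additive[OF GM'] additive_map_in[OF f_add x]] by simp
  next
    fix k i a x assume a: "a \<in> comp A i" and x: "x \<in> comp M k"
    have fx: "f k x \<in> comp M' (k + m)" using additive_map_in[OF f_add x] .
    have "gsign M' (m * i) (act' i a (gsign M' (m * k) (f k x))) =
        gsign M' (m * i) (gsign M' (m * k) (act' i a (f k x)))"
      using additive_map_gsign[OF GM' GM' act_additive_right[OF M' a] fx] by simp
    also have "\<dots> = gsign M' (m * (i + k)) (f (i + k) (act i a x))"
      using gsign_gsign[OF GM' act_in[OF M' a fx]] dg_map_act[OF f a x]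
      by (simp add: distrib_left)
    finally show "gsign M' (m * (i + k)) (f (i + k) (act i a x)) =
        gsign M' (m * i) (act' i a (gsign M' (m * k) (f k x)))" by simp
  next
    fix k x assume x: "x \<in> comp M k"
    have fx: "f k x \<in> comp M' (k + m)" using additive_map_in[OF f_add x] .
    have "gsign M' m (gdiff M' (gsign M' (m * k) (f k x))) =
        gsign M' m (gsign M' (m * k) (gdiff M' (f k x)))"
      using additive_map_gsign[OF GM' GM' gdiff_additive[OF CM'] fx] by simp
    also have "\<dots> = gsign M' (m * (k + 1)) (f (k + 1) (gdiff M x))"
      using gsign_gsign[OF GM' gdiff_in[OF CM' fx]] dg_map_gdiff[OF f x]
      by (simp add: distrib_left add.commute)
    finally show "gsign M' (m * (k + 1)) (f (k + 1) (gdiff M x)) =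
        gsign M' m (gdiff M' (gsign M' (m * k) (f k x)))" by simp
  qed
  moreover have "bij_betw (\<lambda>x. gsign M' (m * k) (f k x)) (comp M k) (comp M' (k + m))" for k
    using bij_betw_trans[OF bij bij_betw_gsign[OF GM', of "m * k"]] by (simp add: o_def)
  ultimately show ?thesis
    by (simp add: dg_iso_iff_dg_map)
qed

lemma dg_iso_inv_into:
  assumes M: "dg_module A mult one M act" and f: "dg_iso A M act M' act' f"
  shows "dg_iso A M' act' M act (\<lambda>k. inv_into (comp M k) (f k))"
proof -
  let ?g = "\<lambda>k. inv_into (comp M k) (f k)"
  have CM: "dg_complex M" using M by (rule dg_module_complex)
  have GM: "graded_module M" using CM by (rule dg_complex_graded_module)
  have bij: "bij_betw (f k) (comp M k) (comp M' k)" for k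
    using f unfolding dg_iso_def by blast
  have g_eq: "?g k y = x" if "x \<in> comp M k" "f k x = y" for k x y
    using inv_into_f_f[OF bij_betw_imp_inj_on[OF bij] that(1)] that(2) by simp
  have g_in: "?g k y \<in> comp M k" and f_g: "f k (?g k y) = y" if "y \<in> comp M' k" for k y
    using that bij_betwE[OF bij_betw_inv_into[OF bij]] f_inv_into_f[of y "f k" "comp M k"]
      bij_betw_imp_surj_on[OF bij] by auto
  show ?thesis
    unfolding dg_iso_def
  proof (intro allI conjI ballI)
    fix k
    show "bij_betw (?g k) (comp M' k) (comp M k)"
      using bij_betw_inv_into[OF bij] .
  next
    fix k y y' assume "y \<in> comp M' k" "y' \<in> comp M' k"
    then show "?g k (gadd M' y y') = gadd M (?g k y) (?g k y')"
      using f g_in f_g by (intro g_eq) (auto simp: dg_iso_def gadd_in[OF GM])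
  next
    fix k r y assume "y \<in> comp M' k"
    then show "?g k (gsmul M' r y) = gsmul M r (?g k y)"
      using f g_in f_g by (intro g_eq) (auto simp: dg_iso_def gsmul_in[OF GM])
  next
    fix k i a y assume a: "a \<in> comp A i" and "y \<in> comp M' k"
    then show "?g (i + k) (act' i a y) = act i a (?g k y)"
      using f g_in f_g by (intro g_eq) (auto simp: dg_iso_def act_in[OF M a])
  next
    fix k y assume "y \<in> comp M' k"
    then show "?g (k + 1) (gdiff M' y) = gdiff M (?g k y)"
      using f g_in f_g by (intro g_eq) (auto simp: dg_iso_def gdiff_in[OF CM])
  qed
qed

lemma shift_dg_iso_of_bij_dg_map:
  assumes M: "dg_module A mult one M act" and M': "dg_module A mult one M' act'"
    and f: "dg_map A M act M' act' m f" and bij: "\<And>k. bij_betw (f k) (comp M k) (comp M' (k + m))"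
  shows "\<exists>g. dg_iso A (shift_mod M' m) (shift_act M' act' m) M act g"
  using dg_iso_inv_into[OF M dg_iso_shift_sign_twist[OF M' f bij]] by blast

section \<open>Internal direct sums\<close>

definition component_tuple :: "(int \<Rightarrow> 'a set) list \<Rightarrow> int \<Rightarrow> 'a list \<Rightarrow> bool" where
  "component_tuple Ns k xs \<longleftrightarrow> length xs = length Ns \<and> (\<forall>j<length Ns. xs ! j \<in> (Ns ! j) k)"

definition submodule_sum :: "('r, 'a) gmod \<Rightarrow> (int \<Rightarrow> 'a set) list \<Rightarrow> int \<Rightarrow> 'a set" where
  "submodule_sum M Ns k = gsum_list M ` {xs. component_tuple Ns k xs}"

definition internal_direct_sum :: "('r, 'a) gmod \<Rightarrow> (int \<Rightarrow> 'a set) list \<Rightarrow> bool" where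
  "internal_direct_sum M Ns \<longleftrightarrow>
    (\<forall>k. \<forall>x\<in>comp M k. \<exists>!xs. component_tuple Ns k xs \<and> x = gsum_list M xs)"

lemma finite_sum_of_dg_simples_iff:
  "finite_sum_of_dg_simples A mult one \<longleftrightarrow> (\<exists>Ns.
    (\<forall>N\<in>set Ns. dg_submodule A A (reg_act mult) N \<and> dg_simple A mult one (sub_mod A N) (reg_act mult)) \<and>
    internal_direct_sum A Ns)"
  by (simp add: finite_sum_of_dg_simples_def internal_direct_sum_def component_tuple_def)

lemma component_tuple_subset:
  assumes "\<forall>N\<in>set Ns. dg_submodule A M act N" and "component_tuple Ns k xs"
  shows "set xs \<subseteq> comp M k"
  using assms dg_submodule_subset unfolding component_tuple_def by (fastforce simp: in_set_conv_nth)

lemma submodule_sum_closed_additive_map: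
  assumes M: "graded_module M" and Ns: "\<forall>N\<in>set Ns. dg_submodule A M act N"
    and h: "additive_map M k M k' h" and hN: "\<forall>j<length Ns. \<forall>x\<in>(Ns ! j) k. h x \<in> (Ns ! j) k'"
    and y: "y \<in> submodule_sum M Ns k"
  shows "h y \<in> submodule_sum M Ns k'"
proof -
  obtain xs where xs: "component_tuple Ns k xs" and y_eq: "y = gsum_list M xs"
    using y unfolding submodule_sum_def by blast
  have "h y = gsum_list M (map h xs)"
    using additive_map_gsum_list[OF M M h component_tuple_subset[OF Ns xs]] y_eq by simp
  moreover have "component_tuple Ns k' (map h xs)"
    using xs hN unfolding component_tuple_def by simp
  ultimately show ?thesis
    unfolding submodule_sum_def by blast
qed

lemma dg_submodule_submodule_sum:
  assumes M: "dg_module A mult one M act" and Ns: "\<forall>N\<in>set Ns. dg_submodule A M act N"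
  shows "dg_submodule A M act (submodule_sum M Ns)"
proof -
  have CM: "dg_complex M" using M by (rule dg_module_complex)
  have GM: "graded_module M" using CM by (rule dg_complex_graded_module)
  have Nj: "dg_submodule A M act (Ns ! j)" if "j < length Ns" for j
    using Ns that by simp
  note closed = submodule_sum_closed_additive_map[OF GM Ns]
  show ?thesis
    unfolding dg_submodule_def
  proof (intro allI conjI ballI)
    fix k
    show "submodule_sum M Ns k \<subseteq> comp M k"
      unfolding submodule_sum_def using gsum_list_in[OF GM] component_tuple_subset[OF Ns] by blast
    have "component_tuple Ns k (replicate (length Ns) (gzero M))"
      using Nj unfolding component_tuple_def dg_submodule_def by simp
    moreover have "gsum_list M (replicate (length Ns) (gzero M)) = gzero M"
      using gsum_list_zeros[OF GM] by simp
    ultimately show "gzero M \<in> submodule_sum M Ns k"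
      unfolding submodule_sum_def by (metis (mono_tags) image_eqI mem_Collect_eq)
  next
    fix k x y assume "x \<in> submodule_sum M Ns k" "y \<in> submodule_sum M Ns k"
    then obtain xs ys where xs: "component_tuple Ns k xs" "x = gsum_list M xs"
      and ys: "component_tuple Ns k ys" "y = gsum_list M ys"
      unfolding submodule_sum_def by blast
    have "gadd M x y = gsum_list M (map2 (gadd M) xs ys)"
      using xs ys gsum_list_map2_gadd[OF GM _ component_tuple_subset[OF Ns xs(1)]
          component_tuple_subset[OF Ns ys(1)]]
      unfolding component_tuple_def by simp
    moreover have "component_tuple Ns k (map2 (gadd M) xs ys)"
      using xs ys Nj unfolding component_tuple_def dg_submodule_def by simp
    ultimately show "gadd M x y \<in> submodule_sum M Ns k"
      unfolding submodule_sum_def by blast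
  next
    fix k x assume "x \<in> submodule_sum M Ns k"
    then show "gneg M x \<in> submodule_sum M Ns k"
      using closed[OF gneg_additive[OF GM]] Nj unfolding dg_submodule_def by blast
  next
    fix k r x assume "x \<in> submodule_sum M Ns k"
    then show "gsmul M r x \<in> submodule_sum M Ns k"
      using closed[OF gsmul_additive[OF GM]] Nj unfolding dg_submodule_def by blast
  next
    fix k i a x assume "a \<in> comp A i" "x \<in> submodule_sum M Ns k"
    then show "act i a x \<in> submodule_sum M Ns (i + k)"
      using closed[OF act_additive_right[OF M]] Nj unfolding dg_submodule_def by blast
  next
    fix k x assume "x \<in> submodule_sum M Ns k"
    then show "gdiff M x \<in> submodule_sum M Ns (k + 1)"
      using closed[OF gdiff_additive[OF CM]] Nj unfolding dg_submodule_def by blast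
  qed
qed

lemma dg_submodule_zero:
  assumes M: "dg_module A mult one M act"
  shows "dg_submodule A M act (\<lambda>k. {gzero M})"
proof -
  have CM: "dg_complex M" using M by (rule dg_module_complex)
  have GM: "graded_module M" using CM by (rule dg_complex_graded_module)
  have "act i a (gzero M) = gzero M" if "a \<in> comp A i" for i a
    using additive_map_gzero[OF GM GM act_additive_right[OF M that, of 0]] .
  then show ?thesis
    unfolding dg_submodule_def
    using gzero_in[OF GM] gadd_zero_left[OF GM gzero_in[OF GM]] gneg_gzero[OF GM]
      additive_map_gzero[OF GM GM gsmul_additive[OF GM, of 0]]
      additive_map_gzero[OF GM GM gdiff_additive[OF CM, of 0]] by simp
qed

lemma component_tuple_update_singleton:
  assumes "j < length Ns" and "z \<in> (Ns ! j) k"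
  shows "component_tuple (Ns[j := (\<lambda>k. {z})]) k xs \<longleftrightarrow> component_tuple Ns k xs \<and> xs ! j = z"
  using assms unfolding component_tuple_def by (auto simp: nth_list_update)

context
  fixes M :: "('r::comm_ring_1, 'a) gmod" and Ns :: "(int \<Rightarrow> 'a set) list"
    and A :: "('r, 'b) gmod" and act :: "int \<Rightarrow> 'b \<Rightarrow> 'a \<Rightarrow> 'a"
  assumes M: "graded_module M" and Ns: "\<forall>N\<in>set Ns. dg_submodule A M act N"
    and sum: "internal_direct_sum M Ns"
begin

lemma internal_direct_sum_unique:
  assumes "component_tuple Ns k xs" "component_tuple Ns k ys" "gsum_list M xs = gsum_list M ys"
  shows "xs = ys"
proof -
  have "gsum_list M xs \<in> comp M k"
    using gsum_list_in[OF M component_tuple_subset[OF Ns assms(1)]] .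
  then show ?thesis
    using sum assms unfolding internal_direct_sum_def by metis
qed

lemma internal_direct_sum_inter_complement:
  assumes j: "j < length Ns" and x: "x \<in> (Ns ! j) k"
    and x': "x \<in> submodule_sum M (Ns[j := (\<lambda>k. {gzero M})]) k"
  shows "x = gzero M"
proof -
  have zero_in: "gzero M \<in> (Ns ! i) k" if "i < length Ns" for i
    using Ns nth_mem[OF that] dg_submodule_gzero by blast
  obtain ys where ys: "component_tuple Ns k ys" "ys ! j = gzero M" and x_ys: "x = gsum_list M ys"
    using x' component_tuple_update_singleton[OF j zero_in[OF j]] unfolding submodule_sum_def by blast
  define zeros where "zeros = replicate (length Ns) (gzero M)"
  have xs: "component_tuple Ns k (zeros[j := x])"
    using x zero_in j unfolding zeros_def component_tuple_def by (auto simp: nth_list_update)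
  have "gsum_list M (zeros[j := x]) = gadd M x (gsum_list M zeros)"
    using gsum_list_update[OF M _ component_tuple_subset[OF Ns xs], of j] j list_update_id[of zeros j]
    unfolding zeros_def by simp
  also have "\<dots> = x"
    using gsum_list_zeros[OF M, of zeros] gadd_zero_right[OF M] x dg_submodule_subset Ns j
    unfolding zeros_def by force
  finally have "zeros[j := x] = ys"
    using internal_direct_sum_unique[OF xs ys(1)] x_ys by simp
  then show ?thesis
    using ys(2) j unfolding zeros_def by auto
qed

lemma internal_direct_sum_decomposition:
  assumes j: "j < length Ns" and x: "x \<in> comp M k"
  shows "\<exists>y\<in>(Ns ! j) k. \<exists>w\<in>submodule_sum M (Ns[j := (\<lambda>k. {gzero M})]) k. x = gadd M y w"
proof -
  obtain xs where xs: "component_tuple Ns k xs" and x_xs: "x = gsum_list M xs"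
    using sum x unfolding internal_direct_sum_def by blast
  have "x = gadd M (xs ! j) (gsum_list M (xs[j := gzero M]))"
    using gsum_list_update[OF M _ component_tuple_subset[OF Ns xs]] xs j x_xs
    unfolding component_tuple_def by simp
  moreover have "component_tuple (Ns[j := (\<lambda>k. {gzero M})]) k (xs[j := gzero M])"
    using component_tuple_update_singleton[OF j] Ns j xs
    by (simp add: dg_submodule_gzero component_tuple_def nth_list_update)
  ultimately show ?thesis
    using xs j unfolding submodule_sum_def component_tuple_def by blast
qed

end

lemma internal_direct_sum_dg_direct_summand:
  assumes A: "dg_algebra A mult one" and Ns: "\<forall>N\<in>set Ns. dg_submodule A A (reg_act mult) N"
    and sum: "internal_direct_sum A Ns" and j: "j < length Ns"
  shows "dg_direct_summand A mult (Ns ! j)"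
proof -
  have GA: "graded_module A"
    using A by (simp add: dg_algebra_def dg_complex_graded_module)
  have regular: "dg_module A mult one A (reg_act mult)"
    using A by (rule dg_algebra_regular_module)
  let ?C = "submodule_sum A (Ns[j := (\<lambda>k. {gzero A})])"
  have "\<forall>N\<in>set (Ns[j := (\<lambda>k. {gzero A})]). dg_submodule A A (reg_act mult) N"
    using Ns dg_submodule_zero[OF regular] set_update_subset_insert by fastforce
  then have C: "dg_submodule A A (reg_act mult) ?C"
    by (rule dg_submodule_submodule_sum[OF regular])
  have "(Ns ! j) k \<inter> ?C k = {gzero A}" for k
    using internal_direct_sum_inter_complement[OF GA Ns sum j] Ns nth_mem[OF j]
      dg_submodule_gzero[OF C] dg_submodule_gzero by blast
  then show ?thesis
    unfolding dg_direct_summand_def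
    using Ns j C internal_direct_sum_decomposition[OF GA Ns sum j] by (intro conjI exI) auto
qed

lemma internal_direct_sum_act_nonzero:
  assumes A: "dg_algebra A mult one" and S: "dg_module A mult one S act"
    and Ns: "\<forall>N\<in>set Ns. dg_submodule A A (reg_act mult) N" and sum: "internal_direct_sum A Ns"
    and z: "z \<in> comp S m" "z \<noteq> gzero S"
  shows "\<exists>j<length Ns. \<exists>e\<in>(Ns ! j) 0. act 0 e z \<noteq> gzero S"
proof (rule ccontr)
  assume "\<not> ?thesis"
  then have annihilates: "act 0 e z = gzero S" if "j < length Ns" "e \<in> (Ns ! j) 0" for j e
    using that by blast
  have GA: "graded_module A"
    using A by (simp add: dg_algebra_def dg_complex_graded_module)
  have GS: "graded_module S"
    using S by (simp add: dg_module_complex dg_complex_graded_module)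
  obtain es where es: "component_tuple Ns 0 es" and one: "one = gsum_list A es"
    using sum dg_algebra_one_in[OF A] unfolding internal_direct_sum_def by blast
  have "z = act 0 one z"
    using act_one[OF S z(1)] by simp
  also have "\<dots> = gsum_list S (map (\<lambda>e. act 0 e z) es)"
    using additive_map_gsum_list[OF GA GS act_additive_left[OF S z(1)] component_tuple_subset[OF Ns es]]
      one by simp
  also have "\<dots> = gzero S"
    using es annihilates by (intro gsum_list_zeros[OF GS]) (auto simp: component_tuple_def in_set_conv_nth)
  finally show False
    using z(2) by contradiction
qed

section \<open>Dg-simple modules as shifted summands\<close>

lemma dg_simple_nonzero_cycle:
  assumes S: "dg_simple A mult one S act"
  obtains m z where "z \<in> comp S m" "z \<noteq> gzero S" "gdiff S z = gzero S"
proof -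
  have CS: "dg_complex S"
    using dg_module_complex[OF dg_simple_dg_module[OF S]] .
  obtain k where "comp S k \<noteq> {gzero S}"
    using dg_simple_nontrivial[OF S] ..
  then obtain s where s: "s \<in> comp S k" "s \<noteq> gzero S"
    using gzero_in[OF dg_complex_graded_module[OF CS], of k] by blast
  show ?thesis
  proof (cases "gdiff S s = gzero S")
    case True
    then show ?thesis using s that by blast
  next
    case False
    then show ?thesis using that gdiff_in[OF CS s(1)] gdiff_gdiff[OF CS s(1)] by blast
  qed
qed

lemma dg_map_act_cycle:
  assumes S: "dg_module A mult one S act" and N: "dg_submodule A A (reg_act mult) N"
    and z: "z \<in> comp S m" and dz: "gdiff S z = gzero S"
  shows "dg_map A (sub_mod A N) (reg_act mult) S act m (\<lambda>k b. act k b z)"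
proof -
  have GS: "graded_module S"
    using S by (simp add: dg_module_complex dg_complex_graded_module)
  have NA: "b \<in> comp A k" if "b \<in> N k" for b k
    using dg_submodule_subset[OF N] that by blast
  note act_z = act_additive_left[OF S z]
  show ?thesis
    unfolding dg_map_def additive_map_def sub_mod_simps reg_act_def
  proof (intro allI conjI ballI)
    fix k b assume b: "b \<in> N k"
    show "act k b z \<in> comp S (k + m)"
      using additive_map_in[OF act_z NA[OF b]] .
    fix b' assume b': "b' \<in> N k"
    show "act k (gadd A b b') z = gadd S (act k b z) (act k b' z)"
      using additive_map_gadd[OF act_z NA[OF b] NA[OF b']] .
  next
    fix k r b assume b: "b \<in> N k"
    show "act k (gsmul A r b) z = gsmul S r (act k b z)"
      using act_gsmul_left[OF S NA[OF b] z] .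
  next
    fix k i a b assume a: "a \<in> comp A i" and b: "b \<in> N k"
    show "act (i + k) (mult a b) z = act i a (act k b z)"
      using act_mult[OF S NA[OF b] a z] .
  next
    fix k b assume b: "b \<in> N k"
    have db: "gdiff A b \<in> comp A (k + 1)"
      using NA[OF dg_submodule_gdiff[OF N b]] .
    have "act k b (gzero S) = gzero S"
      using additive_map_gzero[OF GS GS act_additive_right[OF S NA[OF b], of m]] .
    then show "act (k + 1) (gdiff A b) z = gdiff S (act k b z)"
      using gdiff_act[OF S NA[OF b] z] dz gsign_gzero[OF GS]
        gadd_zero_right[OF GS act_in[OF S db z]] by simp
  qed
qed

theorem lemma3p6:
  fixes A :: "('r::comm_ring_1, 'a) gmod"
    and mult :: "'a \<Rightarrow> 'a \<Rightarrow> 'a" and one :: 'a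
    and S :: "('r, 'm) gmod" and act :: "int \<Rightarrow> 'a \<Rightarrow> 'm \<Rightarrow> 'm"
  assumes "dg_algebra A mult one"
    and "finite_sum_of_dg_simples A mult one"
    and "dg_simple A mult one S act"
  shows "\<exists>n::int. \<exists>N f. dg_direct_summand A mult N \<and>
           dg_iso A (shift_mod S n) (shift_act S act n) (sub_mod A N) (reg_act mult) f"
proof -
  note A = assms(1) and S_simple = assms(3)
  have S: "dg_module A mult one S act"
    using S_simple by (rule dg_simple_dg_module)
  obtain Ns where Ns: "\<forall>N\<in>set Ns. dg_submodule A A (reg_act mult) N"
    and Ns_simple: "\<forall>N\<in>set Ns. dg_simple A mult one (sub_mod A N) (reg_act mult)"
    and sum: "internal_direct_sum A Ns"
    using assms(2) unfolding finite_sum_of_dg_simples_iff by blast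
  obtain m z where z: "z \<in> comp S m" "z \<noteq> gzero S" "gdiff S z = gzero S"
    using dg_simple_nonzero_cycle[OF S_simple] .
  obtain j e where j: "j < length Ns" and e: "e \<in> (Ns ! j) 0" "act 0 e z \<noteq> gzero S"
    using internal_direct_sum_act_nonzero[OF A S Ns sum z(1,2)] by blast
  let ?N = "Ns ! j"
  have N: "dg_submodule A A (reg_act mult) ?N"
    and N_simple: "dg_simple A mult one (sub_mod A ?N) (reg_act mult)"
    using Ns Ns_simple j by simp_all
  have mult_z: "dg_map A (sub_mod A ?N) (reg_act mult) S act m (\<lambda>k b. act k b z)"
    using dg_map_act_cycle[OF S N z(1,3)] .
  have "bij_betw (\<lambda>b. act k b z) (?N k) (comp S (k + m))" for k
    using dg_map_bij_betw_if_dg_simple[OF N_simple S_simple mult_z, of e 0] e by simp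
  then have "\<exists>f. dg_iso A (shift_mod S m) (shift_act S act m) (sub_mod A ?N) (reg_act mult) f"
    using shift_dg_iso_of_bij_dg_map[OF dg_simple_dg_module[OF N_simple] S mult_z] by simp
  moreover have "dg_direct_summand A mult ?N"
    using internal_direct_sum_dg_direct_summand[OF A Ns sum j] .
  ultimately show ?thesis by blast
qed

end
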